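(* Let $n\ge 4$ and let $G$ be a graph having the maximum value of $cM_2$ among all connected graphs of order $n$. Then $$|M(G)|\le -\frac{2}{3}n+\frac{3}{2}+\frac{1}{6}\sqrt{52n^2-132n+81}.$$
   Context: All graphs are finite and simple. For a graph $G$ and a vertex $u$, $d_u(G)$ denotes the degree of $u$ in $G$. The complementary second Zagreb index of $G$ is $cM_2(G)=\sum_{uv\in E(G)}\left|(d_u(G))^2-(d_v(G))^2\right|$. $M(G)$ denotes the set of vertices of $G$ having the maximum degree of $G$. *)

theory Defs
  imports Complex_Main
begin

definition simple_graph :: "'a set \<Rightarrow> 'a set set \<Rightarrow> bool" where
  "simple_graph V E \<longleftrightarrow> finite V \<and>
     (\<forall>e\<in>E. \<exists>u v. e = {u, v} \<and> u \<noteq> v \<and> u \<in> V \<and> v \<in> V)"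

definition degree :: "'a set set \<Rightarrow> 'a \<Rightarrow> nat" where
  "degree E u = card {e \<in> E. u \<in> e}"

definition adj :: "'a set set \<Rightarrow> 'a \<Rightarrow> 'a \<Rightarrow> bool" where
  "adj E u v \<longleftrightarrow> {u, v} \<in> E"

definition connected_graph :: "'a set \<Rightarrow> 'a set set \<Rightarrow> bool" where
  "connected_graph V E \<longleftrightarrow> V \<noteq> {} \<and> (\<forall>u\<in>V. \<forall>v\<in>V. (adj E)\<^sup>*\<^sup>* u v)"

text \<open>Complementary second Zagreb index: sum over edges uv of |d_u^2 - d_v^2|.\<close>
definition cM2 :: "'a set set \<Rightarrow> int" where
  "cM2 E = (\<Sum>e\<in>E. (SOME r. \<exists>u v. e = {u, v} \<and>
                 r = \<bar>(int (degree E u))^2 - (int (degree E v))^2\<bar>))"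

definition max_deg_vertices :: "'a set \<Rightarrow> 'a set set \<Rightarrow> 'a set" where
  "max_deg_vertices V E = {v \<in> V. degree E v = Max (degree E ` V)}"

end

theory Submission
  imports Defs
begin

text \<open>Each edge \<open>uv\<close> contributes \<open>|d\<^sub>u\<^sup>2 - d\<^sub>v\<^sup>2| \<le> (\<Delta>\<^sup>2 - d\<^sub>u\<^sup>2) + (\<Delta>\<^sup>2 - d\<^sub>v\<^sup>2)\<close>,
  so \<open>cM\<^sub>2(G) \<le> \<Sum>\<^sub>v d\<^sub>v (\<Delta>\<^sup>2 - d\<^sub>v\<^sup>2)\<close>. Vertices of maximum degree \<open>\<Delta>\<close> contribute nothing
  to this sum and every other vertex at most \<open>max\<^sub>d d ((n - 1)\<^sup>2 - d\<^sup>2) < 0.39 (n - 1)\<^sup>3\<close>,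
  hence \<open>cM\<^sub>2(G) \<le> 0.39 (n - 1)\<^sup>3 (n - |M(G)|)\<close>. On the other hand an extremal \<open>G\<close> is at
  least as good as the complete split graph with a clique of \<open>t = \<lfloor>n/3\<rfloor>\<close> vertices, whose index
  \<open>t (n - t) ((n - 1)\<^sup>2 - t\<^sup>2)\<close> is at least \<open>0.39 (n - 1)\<^sup>3 (0.47 n + 0.02)\<close>. Therefore
  \<open>|M(G)| \<le> 0.53 n - 0.02\<close>, which is below the claimed bound for \<open>n \<ge> 4\<close>.\<close>

lemma cM2_summand_doubleton:
  "(SOME r. \<exists>u v. {a, b} = {u, v} \<and> r = \<bar>(int (degree E u))^2 - (int (degree E v))^2\<bar>)
     = \<bar>(int (degree E a))^2 - (int (degree E b))^2\<bar>"
proof -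
  let ?P = "\<lambda>r. \<exists>u v. {a, b} = {u, v} \<and> r = \<bar>(int (degree E u))^2 - (int (degree E v))^2\<bar>"
  have "?P (SOME r. ?P r)" by (rule someI[of ?P]) blast
  then show ?thesis by (auto simp: doubleton_eq_iff abs_minus_commute)
qed

lemma simple_graph_edge_subset:
  "simple_graph V E \<Longrightarrow> e \<in> E \<Longrightarrow> e \<subseteq> V"
  unfolding simple_graph_def by fastforce

lemma simple_graph_finite_edges:
  assumes "simple_graph V E" shows "finite E"
proof (rule finite_subset)
  show "E \<subseteq> Pow V" using simple_graph_edge_subset[OF assms] by blast
  show "finite (Pow V)" using assms by (simp add: simple_graph_def)
qed

lemma degree_eq_card_adj:
  assumes "simple_graph V E"
  shows "degree E x = card {y. adj E x y}"
proof -
  have "{e \<in> E. x \<in> e} = (\<lambda>y. {x, y}) ` {y. adj E x y}"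
  proof (intro equalityI subsetI)
    fix e assume "e \<in> {e \<in> E. x \<in> e}"
    then obtain u v where "e = {u, v}" "x \<in> e"
      using assms unfolding simple_graph_def by blast
    then obtain y where "e = {x, y}" by (auto simp: insert_commute)
    with \<open>e \<in> {e \<in> E. x \<in> e}\<close> show "e \<in> (\<lambda>y. {x, y}) ` {y. adj E x y}"
      unfolding adj_def by blast
  qed (auto simp: adj_def)
  moreover have "inj_on (\<lambda>y. {x, y}) {y. adj E x y}"
    by (rule inj_onI) (auto simp: doubleton_eq_iff)
  ultimately show ?thesis unfolding degree_def by (simp add: card_image)
qed

lemma adj_simple_graph:
  "simple_graph V E \<Longrightarrow> adj E x y \<Longrightarrow> x \<noteq> y \<and> y \<in> V"
  unfolding simple_graph_def adj_def by (metis doubleton_eq_iff insert_absorb2)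

lemma degree_le_card:
  assumes "simple_graph V E" "x \<in> V"
  shows "degree E x \<le> card V - 1"
proof -
  have "{y. adj E x y} \<subseteq> V - {x}" using adj_simple_graph[OF assms(1)] by blast
  moreover have "finite V" using assms(1) by (simp add: simple_graph_def)
  ultimately have "card {y. adj E x y} \<le> card (V - {x})" by (simp add: card_mono)
  then show ?thesis using assms by (simp add: degree_eq_card_adj)
qed

lemma cM2_le_deficiency_sum:
  assumes sg: "simple_graph V E" and bound: "\<forall>x\<in>V. degree E x \<le> D"
  shows "cM2 E \<le> (\<Sum>x\<in>V. int (degree E x) * ((int D)^2 - (int (degree E x))^2))"
proof -
  define h where "h x = (int D)^2 - (int (degree E x))^2" for x
  have h_nonneg: "0 \<le> h x" if "x \<in> V" for x
    using bound that unfolding h_def by (simp add: power_mono)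
  have edge: "(SOME r. \<exists>u v. e = {u, v} \<and> r = \<bar>(int (degree E u))^2 - (int (degree E v))^2\<bar>)
      \<le> (\<Sum>x\<in>e. h x)" if "e \<in> E" for e
  proof -
    obtain u v where e: "e = {u, v}" "u \<noteq> v" "u \<in> V" "v \<in> V"
      using sg \<open>e \<in> E\<close> unfolding simple_graph_def by blast
    have "\<bar>(int (degree E u))^2 - (int (degree E v))^2\<bar> \<le> h u + h v"
      using h_nonneg[OF e(3)] h_nonneg[OF e(4)] unfolding h_def by (simp add: abs_le_iff)
    then show ?thesis using e by (simp add: cM2_summand_doubleton)
  qed
  have "cM2 E \<le> (\<Sum>e\<in>E. \<Sum>x\<in>e. h x)"
    unfolding cM2_def by (rule sum_mono) (rule edge)
  also have "\<dots> = (\<Sum>e\<in>E. \<Sum>x\<in>{x. x \<in> V \<and> x \<in> e}. h x)"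
    using simple_graph_edge_subset[OF sg] by (intro sum.cong refl arg_cong[where f = "sum h"]) blast
  also have "\<dots> = (\<Sum>x\<in>V. \<Sum>e\<in>{e. e \<in> E \<and> x \<in> e}. h x)"
    using sg by (intro sum.swap_restrict) (simp_all add: simple_graph_finite_edges simple_graph_def)
  also have "\<dots> = (\<Sum>x\<in>V. int (degree E x) * h x)"
    by (simp add: degree_def)
  finally show ?thesis unfolding h_def .
qed

text \<open>The maximum of \<open>d (N\<^sup>2 - d\<^sup>2)\<close> on \<open>[0, N]\<close> is \<open>2 N\<^sup>3 / (3 sqrt 3) < 0.385 N\<^sup>3\<close>, attained at
  \<open>d = N / sqrt 3\<close>; the certificate below expands around \<open>a = 0.577 \<approx> 1 / sqrt 3\<close>.\<close>
lemma mult_diff_squares_le_cube: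
  fixes d N :: real
  assumes "0 \<le> d" "d \<le> N"
  shows "d * (N^2 - d^2) \<le> 39/100 * N^3"
proof -
  define a :: real where "a = 577/1000"
  have "39/100 * N^3 - d * (N^2 - d^2)
      = (d - a*N)^2 * (d + 2*a*N) + (1 - 3*a^2) * (N - d) * N^2 + (39/100 - 1 + 3*a^2 - 2*a^3) * N^3"
    by (simp add: algebra_simps power2_eq_square power3_eq_cube)
  moreover have "0 \<le> (d - a*N)^2 * (d + 2*a*N)"
    using assms unfolding a_def by simp
  moreover have "0 \<le> (1 - 3*a^2) * (N - d) * N^2"
    using assms unfolding a_def by (simp add: power2_eq_square)
  moreover have "0 \<le> (39/100 - 1 + 3*a^2 - 2*a^3) * N^3"
    using assms unfolding a_def by (simp add: power2_eq_square power3_eq_cube)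
  ultimately show ?thesis by linarith
qed

lemma cM2_le_card_non_max_degree:
  assumes sg: "simple_graph V E" and ne: "V \<noteq> {}"
  shows "real_of_int (cM2 E)
    \<le> real (card V - card (max_deg_vertices V E)) * (39/100 * (real (card V) - 1)^3)"
proof -
  define \<Delta> where "\<Delta> = Max (degree E ` V)"
  define M where "M = max_deg_vertices V E"
  define C :: real where "C = 39/100 * (real (card V) - 1)^3"
  have finV: "finite V" using sg by (simp add: simple_graph_def)
  have deg_le: "degree E x \<le> \<Delta>" if "x \<in> V" for x
    unfolding \<Delta>_def using finV that by simp
  have "\<Delta> \<in> degree E ` V" unfolding \<Delta>_def using finV ne by simp
  then have "\<Delta> \<le> card V - 1" using degree_le_card[OF sg] by blast
  moreover have "card V \<ge> 1" using finV ne by (simp add: Suc_leI card_gt_0_iff)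
  ultimately have \<Delta>_le: "real \<Delta> \<le> real (card V) - 1" by linarith
  have summand_le: "real (degree E x) * ((real \<Delta>)^2 - (real (degree E x))^2) \<le> (if x \<in> M then 0 else C)"
    if "x \<in> V" for x
  proof (cases "x \<in> M")
    case True
    then show ?thesis unfolding M_def max_deg_vertices_def \<Delta>_def by simp
  next
    case False
    have "real (degree E x) * ((real \<Delta>)^2 - (real (degree E x))^2)
        \<le> real (degree E x) * ((real (card V) - 1)^2 - (real (degree E x))^2)"
      using \<Delta>_le by (intro mult_left_mono) (simp_all add: power_mono)
    also have "\<dots> \<le> C"
      unfolding C_def using deg_le[OF that] \<Delta>_le by (intro mult_diff_squares_le_cube) simp_all
    finally show ?thesis using False by simp
  qed
  have "cM2 E \<le> (\<Sum>x\<in>V. int (degree E x) * ((int \<Delta>)^2 - (int (degree E x))^2))"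
    using cM2_le_deficiency_sum[OF sg] deg_le by blast
  then have "real_of_int (cM2 E)
      \<le> real_of_int (\<Sum>x\<in>V. int (degree E x) * ((int \<Delta>)^2 - (int (degree E x))^2))"
    by (simp only: of_int_le_iff)
  also have "\<dots> = (\<Sum>x\<in>V. real (degree E x) * ((real \<Delta>)^2 - (real (degree E x))^2))"
    by simp
  also have "\<dots> \<le> (\<Sum>x\<in>V. if x \<in> M then 0 else C)"
    by (rule sum_mono) (rule summand_le)
  also have "\<dots> = real (card (V - M)) * C"
    by (simp add: sum.If_cases finV Diff_eq)
  also have "card (V - M) = card V - card M"
    unfolding M_def max_deg_vertices_def using finV by (intro card_Diff_subset) auto
  finally show ?thesis unfolding M_def C_def .
qed

definition complete_split_edges :: "'a set \<Rightarrow> 'a set \<Rightarrow> 'a set set" where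
  "complete_split_edges V A = {{a, v} | a v. a \<in> A \<and> v \<in> V \<and> a \<noteq> v}"

lemma adj_complete_split_edges:
  assumes "A \<subseteq> V"
  shows "adj (complete_split_edges V A) x y \<longleftrightarrow> x \<noteq> y \<and> x \<in> V \<and> y \<in> V \<and> (x \<in> A \<or> y \<in> A)"
  using assms unfolding adj_def complete_split_edges_def by (auto simp: doubleton_eq_iff)

lemma simple_graph_complete_split_edges:
  "finite V \<Longrightarrow> A \<subseteq> V \<Longrightarrow> simple_graph V (complete_split_edges V A)"
  unfolding simple_graph_def complete_split_edges_def by blast

lemma connected_graph_complete_split_edges:
  assumes "A \<subseteq> V" "A \<noteq> {}"
  shows "connected_graph V (complete_split_edges V A)"
proof -
  obtain a where a: "a \<in> A" using assms(2) by blast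
  let ?R = "(adj (complete_split_edges V A))\<^sup>*\<^sup>*"
  have "?R u a \<and> ?R a u" if "u \<in> V" for u
  proof (cases "u = a")
    case False
    then have "adj (complete_split_edges V A) u a" "adj (complete_split_edges V A) a u"
      using a that assms(1) by (auto simp: adj_complete_split_edges)
    then show ?thesis by auto
  qed simp
  then show ?thesis
    using a assms(1) unfolding connected_graph_def by (meson empty_iff rtranclp_trans subsetD)
qed

lemma degree_complete_split_edges:
  assumes "finite V" "A \<subseteq> V" "x \<in> V"
  shows "degree (complete_split_edges V A) x = (if x \<in> A then card V - 1 else card A)"
proof -
  have "{y. adj (complete_split_edges V A) x y} = (if x \<in> A then V - {x} else A)"
    using assms by (auto simp: adj_complete_split_edges)
  then show ?thesis
    using assms by (simp add: degree_eq_card_adj[OF simple_graph_complete_split_edges])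
qed

text \<open>Only the edges between \<open>A\<close> and \<open>V - A\<close> contribute; those inside the clique join two
  vertices of degree \<open>card V - 1\<close>.\<close>
lemma cM2_complete_split_edges:
  assumes finV: "finite V" and AV: "A \<subset> V"
  shows "cM2 (complete_split_edges V A)
    = int (card A * card (V - A)) * ((int (card V) - 1)^2 - (int (card A))^2)"
proof -
  have "A \<subseteq> V" using AV by blast
  define E where "E = complete_split_edges V A"
  define w where
    "w e = (SOME r. \<exists>u v. e = {u, v} \<and> r = \<bar>(int (degree E u))^2 - (int (degree E v))^2\<bar>)" for e
  define cross where "cross = (\<lambda>(a, b). {a, b}) ` (A \<times> (V - A))"
  have finE: "finite E"
    unfolding E_def
    by (rule simple_graph_finite_edges[OF simple_graph_complete_split_edges[OF finV \<open>A \<subseteq> V\<close>]])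
  have deg: "degree E x = (if x \<in> A then card V - 1 else card A)" if "x \<in> V" for x
    unfolding E_def using finV \<open>A \<subseteq> V\<close> that by (simp add: degree_complete_split_edges)
  have "card A < card V" using finV AV by (rule psubset_card_mono)
  then have w_cross: "w e = (int (card V) - 1)^2 - (int (card A))^2" if "e \<in> cross" for e
    using that AV unfolding cross_def w_def by (auto simp: cM2_summand_doubleton deg power_mono)
  have w_clique: "w e = 0" if "e \<in> E - cross" for e
  proof -
    obtain a v where e: "e = {a, v}" "a \<in> A" "v \<in> V"
      using \<open>e \<in> E - cross\<close> unfolding E_def complete_split_edges_def by blast
    then have "v \<in> A" using \<open>e \<in> E - cross\<close> unfolding cross_def by blast
    then show ?thesis using e AV unfolding w_def by (auto simp: cM2_summand_doubleton deg)
  qed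
  have "cross \<subseteq> E"
    unfolding cross_def E_def complete_split_edges_def by fastforce
  then have "cM2 E = (\<Sum>e\<in>cross. w e) + (\<Sum>e\<in>E - cross. w e)"
    unfolding cM2_def w_def using finE by (simp add: sum.subset_diff)
  also have "\<dots> = int (card cross) * ((int (card V) - 1)^2 - (int (card A))^2)"
    by (simp add: w_cross w_clique)
  also have "card cross = card A * card (V - A)"
    unfolding cross_def
    by (subst card_image) (auto intro!: inj_onI simp: doubleton_eq_iff card_cartesian_product)
  finally show ?thesis unfolding E_def .
qed

lemma complete_split_index_third_lower_bound:
  fixes n :: nat
  assumes "n \<ge> 4"
  shows "39/100 * (real n - 1)^3 * (47/100 * real n + 2/100)
    \<le> real (n div 3) * (real n - real (n div 3)) * ((real n - 1)^2 - (real (n div 3))^2)"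
proof -
  define gap :: "real \<Rightarrow> real \<Rightarrow> real" where
    "gap t m = 10000 * (t * (m - t) * ((m - 1)^2 - t^2)) - 39 * (m - 1)^3 * (47 * m + 2)" for t m
  note expand = gap_def algebra_simps power2_eq_square power3_eq_cube power4_eq_xxxx
  have "n = 3 * (n div 3) + n mod 3" by simp
  moreover have "n mod 3 < 3" by simp
  ultimately consider "n = 3 * (n div 3)" "n div 3 \<ge> 2"
    | "n = 3 * (n div 3) + 1" "n div 3 \<ge> 1" | "n = 3 * (n div 3) + 2" "n div 3 \<ge> 1"
    using assms by linarith
  then have "0 \<le> gap (real (n div 3)) (real n)"
  proof cases
    case 1
    define s where "s = real (n div 3) - 2"
    have "gap (s + 2) (3 * (s + 2))
        = 295500 + 580525*s + 407465*s^2 + 118583*s^3 + 11527*s^4"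
      by (simp add: expand)
    moreover have "s \<ge> 0" using 1 unfolding s_def by simp
    moreover have "real n = 3 * (s + 2)" using 1 unfolding s_def by (metis diff_add_cancel of_nat_mult of_nat_numeral)
    ultimately show ?thesis unfolding s_def by simp
  next
    case 2
    define s where "s = real (n div 3) - 1"
    have "gap (s + 1) (3 * (s + 1) + 1)
        = 39930 + 131317*s + 154371*s^2 + 74511*s^3 + 11527*s^4"
      by (simp add: expand)
    moreover have "s \<ge> 0" using 2 unfolding s_def by simp
    moreover have "real n = 3 * (s + 1) + 1" using 2 unfolding s_def by (metis diff_add_cancel of_nat_1 of_nat_add of_nat_mult of_nat_numeral)
    ultimately show ?thesis unfolding s_def by simp
  next
    case 3
    define s where "s = real (n div 3) - 1"
    have "gap (s + 1) (3 * (s + 1) + 2)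
        = 8448 + 97072*s + 149900*s^2 + 76547*s^3 + 11527*s^4"
      by (simp add: expand)
    moreover have "s \<ge> 0" using 3 unfolding s_def by simp
    moreover have "real n = 3 * (s + 1) + 2" using 3 unfolding s_def by (metis diff_add_cancel of_nat_add of_nat_mult of_nat_numeral)
    ultimately show ?thesis unfolding s_def by simp
  qed
  then show ?thesis unfolding gap_def by (simp add: algebra_simps)
qed

lemma linear_le_sqrt_expression:
  fixes n :: real
  assumes "n \<ge> 4"
  shows "53/100 * n - 2/100 \<le> - (2/3) * n + 3/2 + (1/6) * sqrt (52 * n^2 - 132 * n + 81)"
proof -
  have "(718/100 * n - 912/100)^2 \<le> 52 * n^2 - 132 * n + 81"
  proof -
    have "0 \<le> n * (n - 4)" using assms by simp
    then show ?thesis by (simp add: power2_eq_square algebra_simps) (use assms in linarith)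
  qed
  then have "718/100 * n - 912/100 \<le> sqrt (52 * n^2 - 132 * n + 81)"
    by (rule real_le_rsqrt)
  then show ?thesis by linarith
qed

theorem proposition3:
  fixes V :: "'a set" and E :: "'a set set" and n :: nat
  assumes "n \<ge> 4"
    and "simple_graph V E" and "connected_graph V E" and "card V = n"
    and "\<forall>(V' :: 'a set) E'. simple_graph V' E' \<and> connected_graph V' E' \<and> card V' = n
            \<longrightarrow> cM2 E' \<le> cM2 E"
  shows "real (card (max_deg_vertices V E))
           \<le> - (2/3) * real n + 3/2 + (1/6) * sqrt (52 * (real n)^2 - 132 * real n + 81)"
proof -
  note n4 = assms(1) and sg = assms(2) and cardV = assms(4) and extremal = assms(5)
  define t where "t = n div 3"
  define k where "k = card (max_deg_vertices V E)"
  define C :: real where "C = 39/100 * (real n - 1)^3"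
  have finV: "finite V" and "V \<noteq> {}"
    using sg assms(3) by (simp_all add: simple_graph_def connected_graph_def)
  obtain A where A: "A \<subseteq> V" "card A = t"
    using obtain_subset_with_card_n[of t V] n4 cardV unfolding t_def by auto
  have "A \<noteq> {}" "A \<noteq> V" using A n4 cardV finV unfolding t_def by auto
  have "C * (47/100 * real n + 2/100)
      \<le> real t * (real n - real t) * ((real n - 1)^2 - (real t)^2)"
    using complete_split_index_third_lower_bound[OF n4] unfolding C_def t_def by (simp add: mult.commute)
  also have "\<dots> = real_of_int (cM2 (complete_split_edges V A))"
    using cM2_complete_split_edges[OF finV] A \<open>A \<noteq> V\<close> finV cardV
    by (simp add: card_Diff_subset finite_subset t_def)
  also have "\<dots> \<le> real_of_int (cM2 E)"
    using extremal simple_graph_complete_split_edges[OF finV A(1)] cardV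
      connected_graph_complete_split_edges[OF A(1) \<open>A \<noteq> {}\<close>]
    by simp
  also have "\<dots> \<le> (real n - real k) * C"
    using cM2_le_card_non_max_degree[OF sg \<open>V \<noteq> {}\<close>] card_mono[OF finV, of "max_deg_vertices V E"]
    unfolding k_def C_def cardV max_deg_vertices_def by simp
  finally have "C * (47/100 * real n + 2/100) \<le> C * (real n - real k)"
    by (simp add: mult.commute)
  moreover have "C > 0" unfolding C_def using n4 by simp
  ultimately have "real k \<le> 53/100 * real n - 2/100" by simp
  also have "\<dots> \<le> - (2/3) * real n + 3/2 + (1/6) * sqrt (52 * (real n)^2 - 132 * real n + 81)"
    using n4 by (intro linear_le_sqrt_expression) simp
  finally show ?thesis unfolding k_def .
qed

end
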